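(* Let $\psi$ be a saturation with saturation level $\alpha>0$ and $\mathbf{u}:[0,L]\to\mathbb{R}^P$ a given velocity. Fix $n$ and suppose $\boldsymbol{\rho}_i^n\ge0$ entry-wise and $\sigma_i^n\le\alpha$ for all $i=1,\dots,M$. If $(\boldsymbol{\rho}_i^{n+1})_{i=1}^M\subset\mathbb{R}^P$ satisfies the implicit scheme $$\frac{\boldsymbol{\rho}_i^{n+1}-\boldsymbol{\rho}_i^n}{\Delta t}+\frac{\mathbf{F}_{i+1/2}^{n+1}-\mathbf{F}_{i-1/2}^{n+1}}{\Delta x}=0,\quad \mathbf{F}_{i+1/2}^{n+1}=\mathrm{diag}(\boldsymbol{\rho}_i^{n+1})(\psi_{i+1}^{n+1})^+\mathbf{u}_{i+1/2}^++\mathrm{diag}(\boldsymbol{\rho}_{i+1}^{n+1})(\psi_i^{n+1})^+\mathbf{u}_{i+1/2}^-,$$ with $\psi_i^n=\psi(\sigma_i^n)$, $\sigma_i^n=\sum_{p=1}^P(\boldsymbol{\rho}_i^n)_p$, $\mathbf{u}_{i+1/2}=\mathbf{u}(x_{i+1/2})$, and no-flux boundary conditions $\mathbf{F}_{1/2}^{n+1}=\mathbf{F}_{M+1/2}^{n+1}=0$, then $\boldsymbol{\rho}_i^{n+1}\ge0$ entry-wise and $\sigma_i^{n+1}\le\alpha$ for all $i$, unconditionally (for any $\Delta t,\Delta x>0$).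
   Context: A saturation is a continuous function $\psi:[0,\infty)\to\mathbb{R}$ that is non-increasing and for which there is $\alpha>0$ (the saturation level) with $\psi(\alpha)=0$ and $(\alpha-s)\psi(s)>0$ for $s\neq\alpha$. Discretisation of $(0,L)$: $\Delta x=L/M$, cells with centres $x_i=\Delta x(i-1/2)$ and interfaces $x_{i+1/2}$; $\boldsymbol{\rho}_i^n\in\mathbb{R}^P$ is the vector of species densities on cell $i$ at time $t^n$. $\mathrm{diag}(\mathbf{v})$ is the diagonal matrix with the entries of $\mathbf{v}$; $(\cdot)^+=\max\{\cdot,0\}$ and $(\cdot)^-=\min\{\cdot,0\}$, applied entry-wise to vectors. (This is a scheme for $\partial_t\boldsymbol{\rho}+\partial_x(\mathrm{diag}(\boldsymbol{\rho})\psi(\sigma)\mathbf{u})=0$.) *)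

theory Defs
  imports Complex_Main
begin

text \<open>Saturation with saturation level alpha: psi defined on [0,infinity); as a
  HOL function real => real its values on negative arguments are arbitrary.\<close>
definition saturation :: "(real \<Rightarrow> real) \<Rightarrow> real \<Rightarrow> bool" where
  "saturation psi alpha \<longleftrightarrow>
     continuous_on {0..} psi \<and>
     (\<forall>s\<in>{0..}. \<forall>t\<in>{0..}. s \<le> t \<longrightarrow> psi t \<le> psi s) \<and>
     alpha > 0 \<and> psi alpha = 0 \<and>
     (\<forall>s\<in>{0..}. s \<noteq> alpha \<longrightarrow> (alpha - s) * psi s > 0)"

definition pospart :: "real \<Rightarrow> real" where "pospart x = max x 0"
definition negpart :: "real \<Rightarrow> real" where "negpart x = min x 0"

definition sigma :: "nat \<Rightarrow> (nat \<Rightarrow> real) \<Rightarrow> real" where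
  "sigma P r = (\<Sum>p\<in>{1..P}. r p)"

text \<open>Numerical flux at interface x_{j+1/2} = dx * j (j = 0..M), species p.
  Cells indexed by 1..M; rho i p is the density of species p in cell i.
  u x p is the p-th component of the velocity at x.\<close>
definition flux :: "(real \<Rightarrow> real) \<Rightarrow> (real \<Rightarrow> nat \<Rightarrow> real) \<Rightarrow> nat \<Rightarrow> nat \<Rightarrow> real
                    \<Rightarrow> (nat \<Rightarrow> nat \<Rightarrow> real) \<Rightarrow> nat \<Rightarrow> nat \<Rightarrow> real" where
  "flux psi u P M dx rho j p =
     (if j = 0 \<or> j = M then 0
      else rho j p * pospart (psi (sigma P (rho (j+1)))) * pospart (u (dx * real j) p)
         + rho (j+1) p * pospart (psi (sigma P (rho j))) * negpart (u (dx * real j) p))"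

end

theory Submission
  imports Defs
begin

text \<open>Both bounds are instances of one discrete maximum principle for implicit conservative
  schemes with no-flux boundary: test the scheme against the indicator of the cells exceeding
  the bound and sum by parts. Every interface where the indicator jumps then contributes a
  flux pointing out of the exceeding region, so the mass above the bound cannot grow.
  For positivity the upwind flux of species p is outgoing from a cell with negative density,
  since it is proportional to the density of its donor cell. For the saturation bound,
  \<open>psi\<close> is negative above \<open>alpha\<close>, so an oversaturated cell accepts no inflow: its
  \<open>(psi)\<^sup>+\<close> factor vanishes.\<close>

lemma sum_by_parts_atLeastAtMost:
  fixes s F :: "nat \<Rightarrow> 'a::comm_ring"
  shows "(\<Sum>i=1..M. s i * (F i - F (i - 1)))
         = (\<Sum>i=1..M. (s i - s (Suc i)) * F i) + s (Suc M) * F M - s 1 * F 0"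
  by (induction M) (simp_all add: algebra_simps)

lemma implicit_conservative_max_principle:
  fixes x y F :: "nat \<Rightarrow> real" and t dt dx :: real and M :: nat
  assumes "dt > 0" and "dx > 0"
    and no_flux: "F 0 = 0" "F M = 0"
    and below: "\<forall>i\<in>{1..M}. y i \<le> t"
    and scheme: "\<forall>i\<in>{1..M}. (x i - y i) / dt + (F i - F (i - 1)) / dx = 0"
    and outflow_right: "\<forall>j\<in>{1..<M}. x j > t \<and> x (Suc j) \<le> t \<longrightarrow> F j \<ge> 0"
    and outflow_left: "\<forall>j\<in>{1..<M}. x j \<le> t \<and> x (Suc j) > t \<longrightarrow> F j \<le> 0"
  shows "\<forall>i\<in>{1..M}. x i \<le> t"
proof (rule ccontr)
  assume "\<not> ?thesis"
  then obtain k where k: "k \<in> {1..M}" "x k > t" by auto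
  define s where "s i = (if x i > t then 1 else 0 :: real)" for i
  have jumps: "(s i - s (Suc i)) * F i \<ge> 0" if "i \<in> {1..M}" for i
    using that outflow_right outflow_left no_flux by (cases "i = M") (auto simp: s_def)
  have "(\<Sum>i=1..M. (s i - s (Suc i)) * F i) \<ge> 0"
    using jumps by (rule sum_nonneg)
  then have flux_balance: "(\<Sum>i=1..M. s i * (F i - F (i - 1))) \<ge> 0"
    by (subst sum_by_parts_atLeastAtMost) (simp add: no_flux)
  have increment: "x i - y i = - (dt / dx) * (F i - F (i - 1))" if "i \<in> {1..M}" for i
    using scheme that \<open>dt > 0\<close> \<open>dx > 0\<close> by (auto simp: field_simps)
  have "(\<Sum>i=1..M. s i * (x i - y i)) = - (dt / dx) * (\<Sum>i=1..M. s i * (F i - F (i - 1)))"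
    unfolding sum_distrib_left by (intro sum.cong) (simp_all add: increment mult.left_commute)
  also have "\<dots> \<le> 0"
    using flux_balance \<open>dt > 0\<close> \<open>dx > 0\<close> by (simp add: mult_nonneg_nonneg)
  finally have "(\<Sum>i=1..M. s i * (x i - y i)) \<le> 0" .
  moreover have "(\<Sum>i=1..M. s i * (x i - y i)) > 0"
  proof (rule sum_pos2[of "{1..M}" k])
    show "s i * (x i - y i) \<ge> 0" if "i \<in> {1..M}" for i
      using below[rule_format, OF that] by (simp add: s_def)
    show "s k * (x k - y k) > 0"
      using k below[rule_format, OF k(1)] by (simp add: s_def)
  qed (use k in simp_all)
  ultimately show False by simp
qed

definition implicit_step ::
    "(real \<Rightarrow> real) \<Rightarrow> (real \<Rightarrow> nat \<Rightarrow> real) \<Rightarrow> nat \<Rightarrow> nat \<Rightarrow> real \<Rightarrow> real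
     \<Rightarrow> (nat \<Rightarrow> nat \<Rightarrow> real) \<Rightarrow> (nat \<Rightarrow> nat \<Rightarrow> real) \<Rightarrow> bool" where
  "implicit_step psi u P M dt dx rho rho' \<longleftrightarrow>
     (\<forall>i\<in>{1..M}. \<forall>p\<in>{1..P}.
        (rho' i p - rho i p) / dt
        + (flux psi u P M dx rho' i p - flux psi u P M dx rho' (i - 1) p) / dx = 0)"

lemma flux_no_flux_boundary:
  "flux psi u P M dx rho 0 p = 0" "flux psi u P M dx rho M p = 0"
  by (simp_all add: flux_def)

lemma pospart_nonneg: "pospart x \<ge> 0"
  by (simp add: pospart_def)

lemma negpart_nonpos: "negpart x \<le> 0"
  by (simp add: negpart_def)

lemma flux_nonneg:
  assumes "rho j p \<ge> 0" "rho (Suc j) p \<le> 0"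
  shows "flux psi u P M dx rho j p \<ge> 0"
proof -
  have "rho j p * pospart a * pospart b \<ge> 0" for a b
    using assms by (intro mult_nonneg_nonneg) (simp_all add: pospart_nonneg)
  moreover have "rho (Suc j) p * pospart a * negpart b \<ge> 0" for a b
    using assms by (intro mult_nonpos_nonpos mult_nonpos_nonneg)
      (simp_all add: pospart_nonneg negpart_nonpos)
  ultimately show ?thesis by (simp add: flux_def)
qed

lemma flux_nonpos:
  assumes "rho j p \<le> 0" "rho (Suc j) p \<ge> 0"
  shows "flux psi u P M dx rho j p \<le> 0"
proof -
  have "rho j p * pospart a * pospart b \<le> 0" for a b
    using assms by (intro mult_nonpos_nonneg) (simp_all add: pospart_nonneg)
  moreover have "rho (Suc j) p * pospart a * negpart b \<le> 0" for a b
    using assms by (intro mult_nonneg_nonpos mult_nonneg_nonneg)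
      (simp_all add: pospart_nonneg negpart_nonpos)
  ultimately show ?thesis by (simp add: flux_def add_nonpos_nonpos)
qed

lemma flux_nonneg_if_psi_left_nonpos:
  assumes "psi (sigma P (rho j)) \<le> 0" "rho j p \<ge> 0"
  shows "flux psi u P M dx rho j p \<ge> 0"
  using assms by (simp add: flux_def pospart_def mult_nonneg_nonneg)

lemma flux_nonpos_if_psi_right_nonpos:
  assumes "psi (sigma P (rho (Suc j))) \<le> 0" "rho (Suc j) p \<ge> 0"
  shows "flux psi u P M dx rho j p \<le> 0"
  using assms by (simp add: flux_def pospart_def negpart_def mult_nonneg_nonpos)

lemma saturation_neg_above:
  assumes "saturation psi alpha" "s > alpha"
  shows "psi s < 0"
proof -
  have "(alpha - s) * psi s > 0"
    using assms by (auto simp: saturation_def)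
  with \<open>s > alpha\<close> show ?thesis by (simp add: zero_less_mult_iff)
qed

lemma implicit_step_preserves_nonneg:
  assumes "dt > 0" "dx > 0" and step: "implicit_step psi u P M dt dx rho rho'"
    and nonneg: "\<forall>i\<in>{1..M}. \<forall>p\<in>{1..P}. rho i p \<ge> 0"
  shows "\<forall>i\<in>{1..M}. \<forall>p\<in>{1..P}. rho' i p \<ge> 0"
proof (intro ballI)
  fix k p assume "k \<in> {1..M}" "p \<in> {1..P}"
  have "\<forall>i\<in>{1..M}. - rho' i p \<le> 0"
  proof (rule implicit_conservative_max_principle
      [where y = "\<lambda>i. - rho i p" and F = "\<lambda>j. - flux psi u P M dx rho' j p"])
    show "\<forall>i\<in>{1..M}. (- rho' i p - - rho i p) / dt
            + (- flux psi u P M dx rho' i p - - flux psi u P M dx rho' (i - 1) p) / dx = 0"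
    proof
      fix i assume "i \<in> {1..M}"
      with step \<open>p \<in> {1..P}\<close> have "(rho' i p - rho i p) / dt
          + (flux psi u P M dx rho' i p - flux psi u P M dx rho' (i - 1) p) / dx = 0"
        by (simp add: implicit_step_def)
      then show "(- rho' i p - - rho i p) / dt
          + (- flux psi u P M dx rho' i p - - flux psi u P M dx rho' (i - 1) p) / dx = 0"
        by (simp add: diff_divide_distrib)
    qed
    show "\<forall>j\<in>{1..<M}. - rho' j p > 0 \<and> - rho' (Suc j) p \<le> 0
            \<longrightarrow> - flux psi u P M dx rho' j p \<ge> 0"
      using flux_nonpos[of rho' j p for j] by (simp add: less_imp_le)
    show "\<forall>j\<in>{1..<M}. - rho' j p \<le> 0 \<and> - rho' (Suc j) p > 0
            \<longrightarrow> - flux psi u P M dx rho' j p \<le> 0"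
      using flux_nonneg[of rho' j p for j] by (simp add: less_imp_le)
  qed (use assms \<open>p \<in> {1..P}\<close> in \<open>simp_all add: flux_no_flux_boundary\<close>)
  with \<open>k \<in> {1..M}\<close> show "rho' k p \<ge> 0" by auto
qed

lemma implicit_step_preserves_saturation_bound:
  assumes "saturation psi alpha" "dt > 0" "dx > 0"
    and step: "implicit_step psi u P M dt dx rho rho'"
    and nonneg_step: "\<forall>i\<in>{1..M}. \<forall>p\<in>{1..P}. rho' i p \<ge> 0"
    and below: "\<forall>i\<in>{1..M}. sigma P (rho i) \<le> alpha"
  shows "\<forall>i\<in>{1..M}. sigma P (rho' i) \<le> alpha"
proof (rule implicit_conservative_max_principle
    [where y = "\<lambda>i. sigma P (rho i)" and F = "\<lambda>j. \<Sum>p\<in>{1..P}. flux psi u P M dx rho' j p"])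
  show "\<forall>i\<in>{1..M}. (sigma P (rho' i) - sigma P (rho i)) / dt
          + ((\<Sum>p\<in>{1..P}. flux psi u P M dx rho' i p)
             - (\<Sum>p\<in>{1..P}. flux psi u P M dx rho' (i - 1) p)) / dx = 0"
  proof
    fix i assume "i \<in> {1..M}"
    with step have "(\<Sum>p\<in>{1..P}. (rho' i p - rho i p) / dt
        + (flux psi u P M dx rho' i p - flux psi u P M dx rho' (i - 1) p) / dx) = 0"
      by (simp add: implicit_step_def)
    then show "(sigma P (rho' i) - sigma P (rho i)) / dt
          + ((\<Sum>p\<in>{1..P}. flux psi u P M dx rho' i p)
             - (\<Sum>p\<in>{1..P}. flux psi u P M dx rho' (i - 1) p)) / dx = 0"
      by (simp only: sigma_def sum.distrib sum_divide_distrib[symmetric] sum_subtractf)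
  qed
  have saturated_blocks: "psi (sigma P (rho' i)) \<le> 0" if "sigma P (rho' i) > alpha" for i
    using saturation_neg_above[OF \<open>saturation psi alpha\<close> that] by simp
  show "\<forall>j\<in>{1..<M}. sigma P (rho' j) > alpha \<and> sigma P (rho' (Suc j)) \<le> alpha
          \<longrightarrow> (\<Sum>p\<in>{1..P}. flux psi u P M dx rho' j p) \<ge> 0"
  proof (intro ballI impI sum_nonneg)
    fix j p assume "j \<in> {1..<M}" "p \<in> {1..P}"
      and "sigma P (rho' j) > alpha \<and> sigma P (rho' (Suc j)) \<le> alpha"
    then show "flux psi u P M dx rho' j p \<ge> 0"
      using nonneg_step by (intro flux_nonneg_if_psi_left_nonpos saturated_blocks) auto
  qed
  show "\<forall>j\<in>{1..<M}. sigma P (rho' j) \<le> alpha \<and> sigma P (rho' (Suc j)) > alpha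
          \<longrightarrow> (\<Sum>p\<in>{1..P}. flux psi u P M dx rho' j p) \<le> 0"
  proof (intro ballI impI sum_nonpos)
    fix j p assume "j \<in> {1..<M}" "p \<in> {1..P}"
      and "sigma P (rho' j) \<le> alpha \<and> sigma P (rho' (Suc j)) > alpha"
    then show "flux psi u P M dx rho' j p \<le> 0"
      using nonneg_step by (intro flux_nonpos_if_psi_right_nonpos saturated_blocks) auto
  qed
qed (use assms in \<open>simp_all add: flux_no_flux_boundary\<close>)

theorem proposition3p4:
  fixes psi :: "real \<Rightarrow> real" and alpha L dt :: real and M P :: nat
    and u :: "real \<Rightarrow> nat \<Rightarrow> real"
    and rho_n rho_n1 :: "nat \<Rightarrow> nat \<Rightarrow> real"
  assumes sat: "saturation psi alpha"
    and L: "L > 0" and M: "M \<ge> 1" and dt: "dt > 0"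
    and nonneg: "\<forall>i\<in>{1..M}. \<forall>p\<in>{1..P}. rho_n i p \<ge> 0"
    and below: "\<forall>i\<in>{1..M}. sigma P (rho_n i) \<le> alpha"
    and scheme: "\<forall>i\<in>{1..M}. \<forall>p\<in>{1..P}.
        (rho_n1 i p - rho_n i p) / dt
        + (flux psi u P M (L / real M) rho_n1 i p - flux psi u P M (L / real M) rho_n1 (i - 1) p)
          / (L / real M) = 0"
  shows "(\<forall>i\<in>{1..M}. \<forall>p\<in>{1..P}. rho_n1 i p \<ge> 0) \<and> (\<forall>i\<in>{1..M}. sigma P (rho_n1 i) \<le> alpha)"
proof -
  have dx: "L / real M > 0" using L M by simp
  have step: "implicit_step psi u P M dt (L / real M) rho_n rho_n1"
    using scheme by (simp add: implicit_step_def)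
  have nonneg_step: "\<forall>i\<in>{1..M}. \<forall>p\<in>{1..P}. rho_n1 i p \<ge> 0"
    using implicit_step_preserves_nonneg[OF dt dx step nonneg] .
  moreover have "\<forall>i\<in>{1..M}. sigma P (rho_n1 i) \<le> alpha"
    using implicit_step_preserves_saturation_bound[OF sat dt dx step nonneg_step below] .
  ultimately show ?thesis by blast
qed

end
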